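(* Let $G$ be a stable (causal) LTI system with $m$ inputs and $p$ outputs. With respect to the adjacency relation $\mathrm{Adj}$ below, with $K=\mathrm{diag}(k_1,\dots,k_m)$ and $|k|_2=(\sum_{i=1}^m k_i^2)^{1/2}$, $$\|GK\|_2\le \Delta^{m,p}_2 G\le |k|_2\,\|G\|_2.$$
   Context: Signals are maps $u:\mathbb N\to\mathbb R^m$. For $k=(k_1,\dots,k_m)$ with all $k_i>0$, two input signals $u,u'$ are adjacent, $\mathrm{Adj}(u,u')$, iff for every $i\in\{1,\dots,m\}$ there exist $t_i\in\mathbb N$ and $\alpha_i\in\mathbb R$ with $|\alpha_i|\le k_i$ and $u'_i-u_i=\alpha_i\delta_{t_i}$, where $\delta_{t}$ is the discrete unit impulse at time $t$. The $\ell_2$-sensitivity of a system $G$ with $m$ inputs and $p$ outputs is $\Delta^{m,p}_2 G=\sup_{\mathrm{Adj}(u,u')}\|G(u-u')\|_2$, where $\|v\|_2=(\sum_t |v_t|_2^2)^{1/2}$. The $\mathcal H_2$ norm of an LTI system $G$ with $m$ inputs is $\|G\|_2^2=\sum_{i=1}^m\|G\delta_0e_i\|_2^2=\frac{1}{2\pi}\int_{-\pi}^{\pi}\mathrm{Tr}(G(e^{j\omega})^*G(e^{j\omega}))\,d\omega$, $e_i$ being the standard basis vectors. *)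

theory Defs
  imports "HOL-Analysis.Analysis"
begin

type_synonym ('n) signal = "nat \<Rightarrow> real ^ 'n"

definition lti :: "(nat \<Rightarrow> real ^ 'm::finite ^ 'p) \<Rightarrow> 'm signal \<Rightarrow> 'p signal" where
  "lti H u = (\<lambda>t. \<Sum>s\<le>t. H (t - s) *v u s)"

definition stable_ir :: "(nat \<Rightarrow> real ^ 'm ^ 'p) \<Rightarrow> bool" where
  "stable_ir H \<longleftrightarrow> (\<forall>i j. summable (\<lambda>t. \<bar>H t $ i $ j\<bar>))"

definition delta :: "nat \<Rightarrow> nat \<Rightarrow> real" where
  "delta t = (\<lambda>s. if s = t then 1 else 0)"

definition sig_l2 :: "'n::finite signal \<Rightarrow> real" where
  "sig_l2 v = sqrt (\<Sum>t. (norm (v t))\<^sup>2)"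

definition Adj :: "real ^ 'm::finite \<Rightarrow> 'm signal \<Rightarrow> 'm signal \<Rightarrow> bool" where
  "Adj k u u' \<longleftrightarrow> (\<forall>i. \<exists>t \<alpha>. \<bar>\<alpha>\<bar> \<le> k $ i \<and> (\<lambda>s. u' s $ i - u s $ i) = (\<lambda>s. \<alpha> * delta t s))"

text \<open>l2 sensitivity (extended real, since the supremum could a priori be infinite).\<close>
definition l2_sens :: "real ^ 'm::finite \<Rightarrow> ('m signal \<Rightarrow> 'p::finite signal) \<Rightarrow> ereal" where
  "l2_sens k G = (SUP (u, u') \<in> {(u, u'). Adj k u u'}. ereal (sig_l2 (G (\<lambda>t. u t - u' t))))"

definition H2_norm :: "('m::finite signal \<Rightarrow> 'p::finite signal) \<Rightarrow> real" where
  "H2_norm G = sqrt (\<Sum>i\<in>UNIV. (sig_l2 (G (\<lambda>t. delta 0 t *\<^sub>R axis i 1)))\<^sup>2)"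

definition diag_mat :: "real ^ 'm::finite \<Rightarrow> real ^ 'm ^ 'm" where
  "diag_mat k = (\<chi> i j. if i = j then k $ i else 0)"

end

theory Submission
  imports Defs
begin

text \<open>
  Let \<open>G = lti H\<close> and write \<open>g\<^sub>i(t) = H(t) e\<^sub>i\<close> for the response of \<open>G\<close> to a unit impulse
  in input channel \<open>i\<close>, so that \<open>\<parallel>G\<parallel>\<^sub>2\<^sup>2 = \<Sum>\<^sub>i \<parallel>g\<^sub>i\<parallel>\<^sup>2\<close> and \<open>\<parallel>GK\<parallel>\<^sub>2\<^sup>2 = \<Sum>\<^sub>i k\<^sub>i\<^sup>2 \<parallel>g\<^sub>i\<parallel>\<^sup>2\<close>.

  Upper bound: for adjacent inputs, \<open>u - u' = \<Sum>\<^sub>i \<alpha>\<^sub>i \<delta>\<^sub>t\<^sub>i e\<^sub>i\<close> with \<open>|\<alpha>\<^sub>i| \<le> k\<^sub>i\<close>, so the output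
  difference is a sum of delayed, scaled columns \<open>\<alpha>\<^sub>i g\<^sub>i(\<cdot> - t\<^sub>i)\<close>.  Delays preserve energy,
  so Minkowski's inequality and Cauchy-Schwarz give \<open>\<le> \<Sum>\<^sub>i k\<^sub>i \<parallel>g\<^sub>i\<parallel> \<le> |k|\<^sub>2 \<parallel>G\<parallel>\<^sub>2\<close>.

  Lower bound: by the parallelogram law, for finitely many square-summable signals \<open>f\<^sub>i\<close>
  one can choose signs \<open>\<epsilon>\<^sub>i = \<plusminus>1\<close> with \<open>\<parallel>\<Sum>\<^sub>i \<epsilon>\<^sub>i f\<^sub>i\<parallel>\<^sup>2 \<ge> \<Sum>\<^sub>i \<parallel>f\<^sub>i\<parallel>\<^sup>2\<close>.  Applied to
  \<open>f\<^sub>i = k\<^sub>i g\<^sub>i\<close>, the adjacent pair \<open>u = \<delta>\<^sub>0 (\<epsilon>\<^sub>i k\<^sub>i)\<^sub>i\<close>, \<open>u' = 0\<close> attains at least \<open>\<parallel>GK\<parallel>\<^sub>2\<close>.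
\<close>

section \<open>Energy of square-summable sequences\<close>

definition square_summable :: "(nat \<Rightarrow> 'a::real_normed_vector) \<Rightarrow> bool" where
  "square_summable f \<longleftrightarrow> summable (\<lambda>t. (norm (f t))\<^sup>2)"

definition energy :: "(nat \<Rightarrow> 'a::real_normed_vector) \<Rightarrow> real" where
  "energy f = (\<Sum>t. (norm (f t))\<^sup>2)"

lemma sig_l2_energy: "sig_l2 f = sqrt (energy f)"
  by (simp add: sig_l2_def energy_def)

lemma energy_nonneg: "square_summable f \<Longrightarrow> 0 \<le> energy f"
  unfolding energy_def square_summable_def by (rule suminf_nonneg) auto

lemma square_summable_add:
  assumes "square_summable f" "square_summable g"
  shows "square_summable (\<lambda>t. f t + g t)"
proof -
  have "summable (\<lambda>t. 2 * (norm (f t))\<^sup>2 + 2 * (norm (g t))\<^sup>2)"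
    using assms unfolding square_summable_def by (intro summable_add summable_mult)
  moreover have "norm ((norm (f t + g t))\<^sup>2) \<le> 2 * (norm (f t))\<^sup>2 + 2 * (norm (g t))\<^sup>2" for t
  proof -
    have "(norm (f t + g t))\<^sup>2 \<le> (norm (f t) + norm (g t))\<^sup>2"
      using norm_triangle_ineq by (rule power_mono) simp
    also have "\<dots> \<le> 2 * (norm (f t))\<^sup>2 + 2 * (norm (g t))\<^sup>2"
      by (smt (verit) sum_squares_bound power2_sum)
    finally show ?thesis by simp
  qed
  ultimately show ?thesis
    unfolding square_summable_def by (rule summable_comparison_test'[where N=0])
qed

lemma square_summable_scaleR: "square_summable f \<Longrightarrow> square_summable (\<lambda>t. c *\<^sub>R f t)"
  unfolding square_summable_def by (simp add: power_mult_distrib summable_mult)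

lemma energy_scaleR: "square_summable f \<Longrightarrow> energy (\<lambda>t. c *\<^sub>R f t) = c\<^sup>2 * energy f"
  unfolding square_summable_def energy_def by (simp add: power_mult_distrib suminf_mult)

lemma square_summable_diff:
  "square_summable f \<Longrightarrow> square_summable g \<Longrightarrow> square_summable (\<lambda>t. f t - g t)"
  using square_summable_add[of f "\<lambda>t. (-1) *\<^sub>R g t"] square_summable_scaleR[of g "-1"] by simp

lemma square_summable_sum:
  "finite I \<Longrightarrow> (\<And>i. i \<in> I \<Longrightarrow> square_summable (f i)) \<Longrightarrow>
     square_summable (\<lambda>t. \<Sum>i\<in>I. f i t)"
proof (induction I rule: finite_induct)
  case empty
  then show ?case by (simp add: square_summable_def)
next
  case (insert x F)
  then show ?case by (simp add: square_summable_add)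
qed

text \<open>Minkowski's inequality for the \<open>\<ell>\<^sub>2\<close> norm \<open>sqrt \<circ> energy\<close>, obtained from the finite
  version \<open>L2_set\<close> on partial sums.\<close>

lemma energy_minkowski:
  assumes f: "square_summable f" and g: "square_summable g"
  shows "sqrt (energy (\<lambda>t. f t + g t)) \<le> sqrt (energy f) + sqrt (energy g)"
proof -
  have partial: "L2_set (\<lambda>t. norm (h t)) {..<n} \<le> sqrt (energy h)"
    if "square_summable h" for h :: "nat \<Rightarrow> 'a" and n
    using that unfolding square_summable_def energy_def L2_set_def
    by (intro real_sqrt_le_mono sum_le_suminf) auto
  have "sqrt (\<Sum>t<n. (norm (f t + g t))\<^sup>2) \<le> sqrt (energy f) + sqrt (energy g)" for n
  proof -
    have "sqrt (\<Sum>t<n. (norm (f t + g t))\<^sup>2) = L2_set (\<lambda>t. norm (f t + g t)) {..<n}"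
      by (simp add: L2_set_def)
    also have "\<dots> \<le> L2_set (\<lambda>t. norm (f t) + norm (g t)) {..<n}"
      by (rule L2_set_mono) (auto simp: norm_triangle_ineq)
    also have "\<dots> \<le> L2_set (\<lambda>t. norm (f t)) {..<n} + L2_set (\<lambda>t. norm (g t)) {..<n}"
      by (rule L2_set_triangle_ineq)
    also have "\<dots> \<le> sqrt (energy f) + sqrt (energy g)"
      using partial[OF f] partial[OF g] by (rule add_mono)
    finally show ?thesis .
  qed
  then have "energy (\<lambda>t. f t + g t) \<le> (sqrt (energy f) + sqrt (energy g))\<^sup>2"
    using square_summable_add[OF f g] unfolding energy_def square_summable_def
    by (intro suminf_le_const) (auto intro: sqrt_le_D)
  then show ?thesis
    using energy_nonneg[OF f] energy_nonneg[OF g] by (intro real_le_lsqrt) auto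
qed

lemma energy_minkowski_sum:
  "finite I \<Longrightarrow> (\<And>i. i \<in> I \<Longrightarrow> square_summable (f i)) \<Longrightarrow>
     sqrt (energy (\<lambda>t. \<Sum>i\<in>I. f i t)) \<le> (\<Sum>i\<in>I. sqrt (energy (f i)))"
proof (induction I rule: finite_induct)
  case empty
  then show ?case by (simp add: energy_def)
next
  case (insert x F)
  have "sqrt (energy (\<lambda>t. f x t + (\<Sum>i\<in>F. f i t)))
          \<le> sqrt (energy (f x)) + sqrt (energy (\<lambda>t. \<Sum>i\<in>F. f i t))"
    using insert by (intro energy_minkowski square_summable_sum) auto
  also have "\<dots> \<le> sqrt (energy (f x)) + (\<Sum>i\<in>F. sqrt (energy (f i)))"
    using insert by simp
  finally show ?case using insert by simp
qed

lemma energy_parallelogram: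
  fixes f g :: "nat \<Rightarrow> 'a::real_inner"
  assumes f: "square_summable f" and g: "square_summable g"
  shows "energy (\<lambda>t. f t + g t) + energy (\<lambda>t. f t - g t) = 2 * energy f + 2 * energy g"
proof -
  have pointwise: "(norm (a + b))\<^sup>2 + (norm (a - b))\<^sup>2 = 2 * (norm a)\<^sup>2 + 2 * (norm b)\<^sup>2"
    for a b :: 'a
    by (simp add: power2_norm_eq_inner inner_add_left inner_add_right inner_diff_left
        inner_diff_right inner_commute)
  have "energy (\<lambda>t. f t + g t) + energy (\<lambda>t. f t - g t)
          = (\<Sum>t. (norm (f t + g t))\<^sup>2 + (norm (f t - g t))\<^sup>2)"
    using square_summable_add[OF f g] square_summable_diff[OF f g]
    unfolding energy_def square_summable_def by (rule suminf_add)
  also have "\<dots> = (\<Sum>t. 2 * (norm (f t))\<^sup>2 + 2 * (norm (g t))\<^sup>2)"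
    by (simp add: pointwise)
  also have "\<dots> = 2 * energy f + 2 * energy g"
    using f g unfolding square_summable_def energy_def
    by (subst suminf_add[symmetric]) (auto intro: summable_mult simp: suminf_mult)
  finally show ?thesis .
qed

text \<open>Induction on the index set; at each step one of \<open>y \<plusminus> f\<^sub>x\<close> has energy
  \<open>\<ge> energy y + energy f\<^sub>x\<close> by the parallelogram law.\<close>

lemma energy_sign_choice:
  fixes f :: "'i \<Rightarrow> nat \<Rightarrow> 'a::real_inner"
  shows "finite I \<Longrightarrow> (\<And>i. i \<in> I \<Longrightarrow> square_summable (f i)) \<Longrightarrow>
    \<exists>\<epsilon>. (\<forall>i. \<epsilon> i = 1 \<or> \<epsilon> i = -1) \<and>
        (\<Sum>i\<in>I. energy (f i)) \<le> energy (\<lambda>t. \<Sum>i\<in>I. \<epsilon> i *\<^sub>R f i t)"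
proof (induction I rule: finite_induct)
  case empty
  then show ?case by (intro exI[of _ "\<lambda>_. 1"]) (simp add: energy_def)
next
  case (insert x F)
  then obtain \<epsilon> where sign: "\<forall>i. \<epsilon> i = 1 \<or> \<epsilon> i = -1"
    and IH: "(\<Sum>i\<in>F. energy (f i)) \<le> energy (\<lambda>t. \<Sum>i\<in>F. \<epsilon> i *\<^sub>R f i t)"
    by auto
  define y where "y = (\<lambda>t. \<Sum>i\<in>F. \<epsilon> i *\<^sub>R f i t)"
  have y: "square_summable y"
    unfolding y_def using insert by (intro square_summable_sum square_summable_scaleR) auto
  have fx: "square_summable (f x)" using insert by auto
  have extend: "(\<lambda>t. \<Sum>i\<in>insert x F. (\<epsilon>(x := c)) i *\<^sub>R f i t) = (\<lambda>t. y t + c *\<^sub>R f x t)" for c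
  proof
    fix t
    have "(\<Sum>i\<in>F. (\<epsilon>(x := c)) i *\<^sub>R f i t) = y t"
      unfolding y_def using insert(2) by (intro sum.cong) auto
    then show "(\<Sum>i\<in>insert x F. (\<epsilon>(x := c)) i *\<^sub>R f i t) = y t + c *\<^sub>R f x t"
      using insert(1,2) by (simp add: add.commute)
  qed
  have total: "(\<Sum>i\<in>insert x F. energy (f i)) \<le> energy y + energy (f x)"
    using insert(1,2) IH unfolding y_def by simp
  obtain c :: real where c: "c = 1 \<or> c = -1"
    and larger: "energy y + energy (f x) \<le> energy (\<lambda>t. y t + c *\<^sub>R f x t)"
  proof (cases "energy y + energy (f x) \<le> energy (\<lambda>t. y t + f x t)")
    case True
    then show ?thesis using that[of 1] by simp
  next
    case False
    then have "energy y + energy (f x) \<le> energy (\<lambda>t. y t - f x t)"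
      using energy_parallelogram[OF y fx] by linarith
    then show ?thesis using that[of "-1"] by simp
  qed
  show ?case
  proof (intro exI conjI)
    show "\<forall>i. (\<epsilon>(x := c)) i = 1 \<or> (\<epsilon>(x := c)) i = -1" using sign c by simp
    show "(\<Sum>i\<in>insert x F. energy (f i)) \<le> energy (\<lambda>t. \<Sum>i\<in>insert x F. (\<epsilon>(x := c)) i *\<^sub>R f i t)"
      unfolding extend using total larger by linarith
  qed
qed

section \<open>Delayed signals\<close>

definition delay :: "nat \<Rightarrow> (nat \<Rightarrow> 'a::zero) \<Rightarrow> nat \<Rightarrow> 'a" where
  "delay t0 f = (\<lambda>t. if t0 \<le> t then f (t - t0) else 0)"

lemma delay_0 [simp]: "delay 0 f = f"
  by (simp add: delay_def)

text \<open>A delay only prepends zeros, so it preserves square-summability and energy.\<close>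

lemma delay_energy_sums:
  assumes "square_summable f"
  shows "(\<lambda>t. (norm (delay t0 f t))\<^sup>2) sums energy f"
proof -
  let ?F = "\<lambda>t. (norm (delay t0 f t))\<^sup>2"
  have "(\<lambda>t. ?F (t + t0)) = (\<lambda>t. (norm (f t))\<^sup>2)"
    by (simp add: delay_def)
  then have "(\<lambda>t. ?F (t + t0)) sums energy f"
    using assms unfolding square_summable_def energy_def by (simp add: summable_sums)
  then have "?F sums (energy f + (\<Sum>t<t0. ?F t))"
    by (rule sums_iff_shift[THEN iffD1])
  moreover have "(\<Sum>t<t0. ?F t) = 0"
    by (simp add: delay_def)
  ultimately show ?thesis by simp
qed

lemma square_summable_delay: "square_summable f \<Longrightarrow> square_summable (delay t0 f)"
  unfolding square_summable_def[of "delay t0 f"] by (rule sums_summable[OF delay_energy_sums])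

lemma energy_delay: "square_summable f \<Longrightarrow> energy (delay t0 f) = energy f"
  unfolding energy_def[of "delay t0 f"] by (rule sums_unique[symmetric, OF delay_energy_sums])

section \<open>Impulse responses of LTI systems\<close>

definition column_response :: "(nat \<Rightarrow> real ^ 'm::finite ^ 'p::finite) \<Rightarrow> 'm \<Rightarrow> nat \<Rightarrow> real ^ 'p" where
  "column_response H i = (\<lambda>t. H t *v axis i 1)"

lemma lti_impulse: "lti H (\<lambda>s. delta t0 s *\<^sub>R v) = delay t0 (\<lambda>t. H t *v v)"
proof
  fix t
  have "lti H (\<lambda>s. delta t0 s *\<^sub>R v) t = (\<Sum>s\<le>t. if s = t0 then H (t - s) *v v else 0)"
    unfolding lti_def delta_def by (intro sum.cong) auto
  also have "\<dots> = delay t0 (\<lambda>t. H t *v v) t"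
    by (simp add: delay_def)
  finally show "lti H (\<lambda>s. delta t0 s *\<^sub>R v) t = delay t0 (\<lambda>t. H t *v v) t" .
qed

lemma lti_sum: "finite I \<Longrightarrow> lti H (\<lambda>s. \<Sum>i\<in>I. u i s) = (\<lambda>t. \<Sum>i\<in>I. lti H (u i) t)"
  unfolding lti_def by (simp add: vec.sum sum.swap[of _ I])

lemma response_combination: "H t *v v = (\<Sum>i\<in>UNIV. v $ i *\<^sub>R column_response H i t)"
  by (simp only: column_response_def matrix_mult_sum[of "H t"] matrix_vector_mult_basis scalar_mult_eq_scaleR)

text \<open>A summable nonnegative sequence eventually lies below 1, hence dominates its squares.\<close>

lemma summable_square_of_summable_nonneg:
  fixes S :: "nat \<Rightarrow> real"
  assumes "summable S" "\<And>t. 0 \<le> S t"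
  shows "summable (\<lambda>t. (S t)\<^sup>2)"
proof -
  obtain N where N: "\<And>n. n \<ge> N \<Longrightarrow> norm (S n - 0) < 1"
    using LIMSEQ_D[OF summable_LIMSEQ_zero[OF assms(1)], of 1] by auto
  show ?thesis
  proof (rule summable_comparison_test'[OF assms(1), of N])
    fix n assume "N \<le> n"
    then have "S n < 1" "0 \<le> S n" using N[of n] assms(2)[of n] by auto
    then show "norm ((S n)\<^sup>2) \<le> S n" by (simp add: power2_eq_square mult_left_le)
  qed
qed

text \<open>Stability (absolute summability of the entries) implies that every column response has
  finite energy, since each column norm is dominated by its \<open>\<ell>\<^sub>1\<close> norm.\<close>

lemma square_summable_column_response:
  assumes "stable_ir H"
  shows "square_summable (column_response H i)"
proof -
  define S where "S t = (\<Sum>p\<in>UNIV. \<bar>H t $ p $ i\<bar>)" for t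
  have "summable S"
    unfolding S_def using assms unfolding stable_ir_def by (intro summable_sum) auto
  then have "summable (\<lambda>t. (S t)\<^sup>2)"
    by (rule summable_square_of_summable_nonneg) (simp add: S_def sum_nonneg)
  moreover have "norm ((norm (column_response H i t))\<^sup>2) \<le> (S t)\<^sup>2" for t
  proof -
    have "norm (column_response H i t) \<le> S t"
      using norm_le_l1_cart[of "column_response H i t"]
      by (simp add: S_def column_response_def matrix_vector_mult_basis column_def)
    then show ?thesis by (simp add: power_mono)
  qed
  ultimately show ?thesis
    unfolding square_summable_def by (rule summable_comparison_test'[where N=0])
qed

lemma H2_norm_lti: "H2_norm (lti H) = L2_set (\<lambda>i. sig_l2 (column_response H i)) UNIV"
  by (simp add: H2_norm_def L2_set_def lti_impulse column_response_def)

lemma diag_mat_mult_axis: "diag_mat k *v axis i 1 = k $ i *\<^sub>R axis i 1"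
proof -
  have "(diag_mat k *v axis i 1) $ j = (\<Sum>l\<in>UNIV. if l = j then k $ j * axis i 1 $ l else 0)" for j
  proof -
    have "(diag_mat k *v axis i 1) $ j = (\<Sum>l\<in>UNIV. (if j = l then k $ j else 0) * axis i 1 $ l)"
      by (simp add: matrix_vector_mult_def diag_mat_def)
    also have "\<dots> = (\<Sum>l\<in>UNIV. if l = j then k $ j * axis i 1 $ l else 0)"
      by (intro sum.cong) auto
    finally show ?thesis .
  qed
  then show ?thesis by (simp add: vec_eq_iff axis_def)
qed

lemma H2_norm_lti_diag:
  assumes "stable_ir H"
  shows "H2_norm (\<lambda>u. lti H (\<lambda>t. diag_mat k *v u t))
           = sqrt (\<Sum>i\<in>UNIV. energy (\<lambda>t. k $ i *\<^sub>R column_response H i t))"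
proof -
  have "lti H (\<lambda>t. diag_mat k *v (delta 0 t *\<^sub>R axis i 1))
          = lti H (\<lambda>t. delta 0 t *\<^sub>R (k $ i *\<^sub>R axis i 1))" for i
    by (simp only: matrix_vector_mult_scaleR diag_mat_mult_axis)
  also have "\<dots> i = (\<lambda>t. k $ i *\<^sub>R column_response H i t)" for i
    by (subst lti_impulse) (simp add: column_response_def matrix_vector_mult_scaleR)
  moreover have "0 \<le> energy (\<lambda>t. k $ i *\<^sub>R column_response H i t)" for i
    using assms by (intro energy_nonneg square_summable_scaleR square_summable_column_response)
  ultimately show ?thesis
    by (simp add: H2_norm_def sig_l2_energy)
qed

section \<open>The two sensitivity bounds\<close>

lemma Adj_impulse:
  assumes "\<forall>i. \<bar>v $ i\<bar> \<le> k $ i"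
  shows "Adj k (\<lambda>s. u s + delta t0 s *\<^sub>R v) u"
  unfolding Adj_def
proof
  fix i
  have "(\<lambda>s. u s $ i - (u s + delta t0 s *\<^sub>R v) $ i) = (\<lambda>s. (- v $ i) * delta t0 s)"
    by (simp add: mult.commute)
  moreover have "\<bar>- v $ i\<bar> \<le> k $ i" using assms by simp
  ultimately show "\<exists>t \<alpha>. \<bar>\<alpha>\<bar> \<le> k $ i \<and>
      (\<lambda>s. u s $ i - (u s + delta t0 s *\<^sub>R v) $ i) = (\<lambda>s. \<alpha> * delta t s)"
    by blast
qed

text \<open>Lower bound: a single impulse with signed amplitudes \<open>\<epsilon>\<^sub>i k\<^sub>i\<close> in all channels at time 0.\<close>

lemma l2_sens_lower_bound:
  assumes stable: "stable_ir H" and k_nonneg: "\<forall>i. 0 \<le> k $ i"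
  shows "ereal (H2_norm (\<lambda>u. lti H (\<lambda>t. diag_mat k *v u t))) \<le> l2_sens k (lti H)"
proof -
  define f where "f i = (\<lambda>t. k $ i *\<^sub>R column_response H i t)" for i
  have f: "square_summable (f i)" for i
    unfolding f_def using stable by (intro square_summable_scaleR square_summable_column_response)
  obtain \<epsilon> :: "'a \<Rightarrow> real" where sign: "\<forall>i. \<epsilon> i = 1 \<or> \<epsilon> i = -1"
    and large: "(\<Sum>i\<in>UNIV. energy (f i)) \<le> energy (\<lambda>t. \<Sum>i\<in>UNIV. \<epsilon> i *\<^sub>R f i t)"
    using energy_sign_choice[of UNIV f] f by auto
  define v where "v = (\<chi> i. \<epsilon> i * k $ i)"
  define u :: "'a signal" where "u = (\<lambda>s. delta 0 s *\<^sub>R v)"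
  have "\<bar>\<epsilon> i\<bar> = 1" for i using sign by (metis abs_minus_cancel abs_one)
  then have "Adj k (\<lambda>s. 0 + delta 0 s *\<^sub>R v) (\<lambda>s. 0)"
    using k_nonneg by (intro Adj_impulse) (simp add: v_def abs_mult)
  then have adj: "Adj k u (\<lambda>s. 0)" by (simp add: u_def)
  have "lti H (\<lambda>t. u t - 0) = (\<lambda>t. H t *v v)"
    by (simp add: u_def lti_impulse)
  also have "\<dots> = (\<lambda>t. \<Sum>i\<in>UNIV. \<epsilon> i *\<^sub>R f i t)"
    by (simp add: response_combination v_def f_def)
  finally have "H2_norm (\<lambda>u. lti H (\<lambda>t. diag_mat k *v u t)) \<le> sig_l2 (lti H (\<lambda>t. u t - 0))"
    using large by (simp add: H2_norm_lti_diag[OF stable] sig_l2_energy f_def)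
  then show ?thesis
    unfolding l2_sens_def using adj by (intro SUP_upper2[of "(u, \<lambda>s. 0)"]) auto
qed

lemma Adj_difference:
  assumes "Adj k u u'"
  obtains T A where "\<forall>i. \<bar>A i\<bar> \<le> k $ i"
    and "(\<lambda>s. u s - u' s) = (\<lambda>s. \<Sum>i\<in>UNIV. delta (T i) s *\<^sub>R (A i *\<^sub>R axis i 1))"
proof -
  obtain T \<alpha> where bound: "\<And>i. \<bar>\<alpha> i\<bar> \<le> k $ i"
    and impulse: "\<And>i. (\<lambda>s. u' s $ i - u s $ i) = (\<lambda>s. \<alpha> i * delta (T i) s)"
    using assms unfolding Adj_def by metis
  have components: "u s $ j - u' s $ j = (\<Sum>i\<in>UNIV. delta (T i) s *\<^sub>R ((- \<alpha> i) *\<^sub>R axis i 1)) $ j" for s j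
    using fun_cong[OF impulse[of j], of s]
    by (simp add: sum_component axis_def if_distrib cong: if_cong) (metis minus_diff_eq mult.commute)
  have "(\<lambda>s. u s - u' s) = (\<lambda>s. \<Sum>i\<in>UNIV. delta (T i) s *\<^sub>R ((- \<alpha> i) *\<^sub>R axis i 1))"
    unfolding fun_eq_iff vec_eq_iff vector_minus_component using components by blast
  moreover have "\<forall>i. \<bar>- \<alpha> i\<bar> \<le> k $ i" using bound by simp
  ultimately show ?thesis by (rule that[of "\<lambda>i. - \<alpha> i" T, rotated])
qed

text \<open>Upper bound for one adjacent pair: the output difference is a sum of delayed columns
  \<open>A\<^sub>i g\<^sub>i(\<cdot> - T\<^sub>i)\<close>; bound it by Minkowski and then by Cauchy-Schwarz.\<close>

lemma impulse_train_response_bound: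
  assumes stable: "stable_ir H" and bound: "\<forall>i. \<bar>A i\<bar> \<le> k $ i"
  shows "sig_l2 (lti H (\<lambda>s. \<Sum>i\<in>UNIV. delta (T i) s *\<^sub>R (A i *\<^sub>R axis i 1)))
           \<le> norm k * H2_norm (lti H)"
proof -
  define g where "g i = delay (T i) (\<lambda>t. A i *\<^sub>R column_response H i t)" for i
  have g: "square_summable (g i)" for i
    unfolding g_def using stable
    by (intro square_summable_delay square_summable_scaleR square_summable_column_response)
  have "lti H (\<lambda>s. \<Sum>i\<in>UNIV. delta (T i) s *\<^sub>R (A i *\<^sub>R axis i 1)) = (\<lambda>t. \<Sum>i\<in>UNIV. g i t)"
    by (simp only: lti_sum[OF finite] lti_impulse)
      (simp add: g_def column_response_def matrix_vector_mult_scaleR)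
  then have "sig_l2 (lti H (\<lambda>s. \<Sum>i\<in>UNIV. delta (T i) s *\<^sub>R (A i *\<^sub>R axis i 1)))
               \<le> (\<Sum>i\<in>UNIV. sqrt (energy (g i)))"
    unfolding sig_l2_energy using g by (simp add: energy_minkowski_sum)
  also have "\<dots> = (\<Sum>i\<in>UNIV. \<bar>A i\<bar> * sig_l2 (column_response H i))"
    using stable
    by (simp add: g_def energy_delay energy_scaleR square_summable_scaleR
        square_summable_column_response real_sqrt_mult sig_l2_energy)
  also have "\<dots> \<le> (\<Sum>i\<in>UNIV. \<bar>k $ i\<bar> * \<bar>sig_l2 (column_response H i)\<bar>)"
  proof (intro sum_mono mult_mono)
    fix i
    show "\<bar>A i\<bar> \<le> \<bar>k $ i\<bar>" using bound abs_ge_self order_trans by blast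
    show "0 \<le> sig_l2 (column_response H i)"
      using stable by (simp add: sig_l2_energy energy_nonneg square_summable_column_response)
  qed auto
  also have "\<dots> \<le> L2_set (\<lambda>i. k $ i) UNIV * L2_set (\<lambda>i. sig_l2 (column_response H i)) UNIV"
    by (rule L2_set_mult_ineq[of "\<lambda>i. k $ i"])
  also have "\<dots> = norm k * H2_norm (lti H)"
    by (simp add: norm_vec_def H2_norm_lti L2_set_def)
  finally show ?thesis .
qed

lemma l2_sens_upper_bound:
  assumes "stable_ir H"
  shows "l2_sens k (lti H) \<le> ereal (norm k * H2_norm (lti H))"
  unfolding l2_sens_def
proof (rule SUP_least, clarify)
  fix u u' :: "'a signal"
  assume "Adj k u u'"
  then obtain T A where "\<forall>i. \<bar>A i\<bar> \<le> k $ i"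
    and "(\<lambda>s. u s - u' s) = (\<lambda>s. \<Sum>i\<in>UNIV. delta (T i) s *\<^sub>R (A i *\<^sub>R axis i 1))"
    by (rule Adj_difference)
  then show "ereal (sig_l2 (lti H (\<lambda>t. u t - u' t))) \<le> ereal (norm k * H2_norm (lti H))"
    using impulse_train_response_bound[OF assms] by simp
qed

theorem theorem4:
  fixes H :: "nat \<Rightarrow> real ^ 'm ^ 'p" and k :: "real ^ 'm"
  assumes "stable_ir H"
    and "\<forall>i. k $ i > 0"
  shows "ereal (H2_norm (\<lambda>u. lti H (\<lambda>t. diag_mat k *v u t))) \<le> l2_sens k (lti H)
       \<and> l2_sens k (lti H) \<le> ereal (norm k * H2_norm (lti H))"
proof
  show "ereal (H2_norm (\<lambda>u. lti H (\<lambda>t. diag_mat k *v u t))) \<le> l2_sens k (lti H)"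
    using assms by (intro l2_sens_lower_bound) (auto intro: less_imp_le)
  show "l2_sens k (lti H) \<le> ereal (norm k * H2_norm (lti H))"
    using assms(1) by (rule l2_sens_upper_bound)
qed

end
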